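(* Let $G$ be a multiplicative monoid with identity, let $N$ be a $G$-graded near-ring, and let $P$ be a graded weakly prime ideal of $N$. If $I$ and $J$ are graded ideals of $N$ with $IJ=\{0\}$, $I\not\subseteq P$ and $J\not\subseteq P$, then $IP = PJ$.
   Context: A near-ring $(N,+,\cdot)$ is a set with two binary operations such that $(N,+)$ is a group (not necessarily abelian), $(N,\cdot)$ is a semigroup, and $(a+b)y = ay+by$ for all $a,b,y\in N$. For a multiplicative monoid $G$ with identity, $N$ is a $G$-graded near-ring if there is a family $\{N_\sigma\}_{\sigma\in G}$ of additive normal subgroups of $N$ with $N=\bigoplus_{\sigma\in G}N_\sigma$ and $N_\sigma N_\tau\subseteq N_{\sigma\tau}$. An ideal $P$ of $N$ is graded if $P=\bigoplus_{\sigma}(P\cap N_\sigma)$. For ideals $I,J$, $IJ$ denotes their product. A graded ideal $P$ is graded weakly prime if for all graded ideals $I,J$ of $N$ with $\{0\}\neq IJ\subseteq P$, either $I\subseteq P$ or $J\subseteq P$. *)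

theory Defs
  imports Main
begin

text \<open>A (right) near-ring: (N,+) a not necessarily abelian group, (N,*) a semigroup,
  and right distributivity (a+b)y = ay+by. The carrier is the whole type.\<close>
class near_ring = group_add + semigroup_mult +
  assumes nr_distrib_right: "(a + b) * c = a * c + b * c"

definition add_normal_subgroup :: "'a::group_add set \<Rightarrow> bool" where
  "add_normal_subgroup H \<longleftrightarrow> 0 \<in> H \<and> (\<forall>x\<in>H. \<forall>y\<in>H. x + y \<in> H) \<and> (\<forall>x\<in>H. - x \<in> H)
     \<and> (\<forall>x. \<forall>h\<in>H. x + h - x \<in> H)"

definition nr_ideal :: "'a::near_ring set \<Rightarrow> bool" where
  "nr_ideal I \<longleftrightarrow> add_normal_subgroup I \<and> (\<forall>i\<in>I. \<forall>n. i * n \<in> I)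
     \<and> (\<forall>n m. \<forall>i\<in>I. n * (m + i) - n * m \<in> I)"

definition ideal_prod :: "'a::near_ring set \<Rightarrow> 'a set \<Rightarrow> 'a set" where
  "ideal_prod I J = {i * j | i j. i \<in> I \<and> j \<in> J}"

text \<open>Internal direct sum decomposition N = \<Oplus>_\<sigma> N_\<sigma> (with the N_\<sigma> normal subgroups),
  and N_\<sigma> N_\<tau> \<subseteq> N_{\<sigma>\<tau>}.\<close>
definition graded_near_ring :: "('g::monoid_mult \<Rightarrow> 'a::near_ring set) \<Rightarrow> bool" where
  "graded_near_ring Ns \<longleftrightarrow>
     (\<forall>\<sigma>. add_normal_subgroup (Ns \<sigma>))
   \<and> (\<forall>x. \<exists>\<sigma>s f. distinct \<sigma>s \<and> (\<forall>\<sigma>\<in>set \<sigma>s. f \<sigma> \<in> Ns \<sigma>) \<and> x = sum_list (map f \<sigma>s))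
   \<and> (\<forall>\<sigma>s f. distinct \<sigma>s \<and> (\<forall>\<sigma>\<in>set \<sigma>s. f \<sigma> \<in> Ns \<sigma>) \<and> sum_list (map f \<sigma>s) = 0
          \<longrightarrow> (\<forall>\<sigma>\<in>set \<sigma>s. f \<sigma> = 0))
   \<and> (\<forall>\<sigma> \<tau>. \<forall>a\<in>Ns \<sigma>. \<forall>b\<in>Ns \<tau>. a * b \<in> Ns (\<sigma> * \<tau>))"

definition graded_ideal :: "('g::monoid_mult \<Rightarrow> 'a::near_ring set) \<Rightarrow> 'a set \<Rightarrow> bool" where
  "graded_ideal Ns P \<longleftrightarrow> nr_ideal P \<and>
     (\<forall>x\<in>P. \<exists>\<sigma>s f. distinct \<sigma>s \<and> (\<forall>\<sigma>\<in>set \<sigma>s. f \<sigma> \<in> P \<inter> Ns \<sigma>) \<and> x = sum_list (map f \<sigma>s))"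

definition graded_weakly_prime :: "('g::monoid_mult \<Rightarrow> 'a::near_ring set) \<Rightarrow> 'a set \<Rightarrow> bool" where
  "graded_weakly_prime Ns P \<longleftrightarrow> graded_ideal Ns P \<and>
     (\<forall>I J. graded_ideal Ns I \<and> graded_ideal Ns J \<and> ideal_prod I J \<noteq> {0} \<and> ideal_prod I J \<subseteq> P
        \<longrightarrow> I \<subseteq> P \<or> J \<subseteq> P)"

end

theory Submission
  imports Defs "HOL-Library.Set_Algebras"
begin

text \<open>Since \<open>I J = 0\<close>, the ideal axioms give \<open>I (J + P) \<subseteq> P\<close> and \<open>(I + P) J \<subseteq> P\<close>.
  Sums of graded ideals are graded, and neither \<open>I\<close> nor \<open>J + P\<close> (resp. \<open>I + P\<close>, \<open>J\<close>) lies
  in \<open>P\<close>, so weak primeness forces both products to be \<open>{0}\<close>; they contain \<open>I P\<close> and \<open>P J\<close>,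
  which are therefore both \<open>{0}\<close>.
  The only delicate point is that the additive group is not abelian: adding two homogeneous
  decompositions relies on components of different degrees commuting, which holds because
  they are normal subgroups with trivial intersection.\<close>

lemma add_normal_subgroupD:
  assumes "add_normal_subgroup H"
  shows add_normal_subgroup_zero: "0 \<in> H"
    and add_normal_subgroup_add: "x \<in> H \<Longrightarrow> y \<in> H \<Longrightarrow> x + y \<in> H"
    and add_normal_subgroup_uminus: "x \<in> H \<Longrightarrow> - x \<in> H"
    and add_normal_subgroup_conj: "h \<in> H \<Longrightarrow> x + h - x \<in> H"
  using assms unfolding add_normal_subgroup_def by blast+

lemma nr_idealD:
  assumes "nr_ideal I"
  shows nr_ideal_normal: "add_normal_subgroup I"
    and nr_ideal_mult_right: "i \<in> I \<Longrightarrow> i * n \<in> I"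
    and nr_ideal_mult_left: "i \<in> I \<Longrightarrow> n * (m + i) - n * m \<in> I"
  using assms unfolding nr_ideal_def by blast+

lemma nr_ideal_zero: "nr_ideal I \<Longrightarrow> 0 \<in> I"
  by (rule add_normal_subgroup_zero[OF nr_ideal_normal])

lemma graded_ideal_nr_ideal: "graded_ideal Ns I \<Longrightarrow> nr_ideal I"
  unfolding graded_ideal_def by blast

lemma graded_near_ringD:
  assumes "graded_near_ring Ns"
  shows graded_near_ring_normal: "add_normal_subgroup (Ns \<sigma>)"
    and graded_near_ring_independent: "distinct \<sigma>s \<Longrightarrow> \<forall>\<sigma>\<in>set \<sigma>s. f \<sigma> \<in> Ns \<sigma> \<Longrightarrow>
      sum_list (map f \<sigma>s) = 0 \<Longrightarrow> \<forall>\<sigma>\<in>set \<sigma>s. f \<sigma> = 0"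
  using assms unfolding graded_near_ring_def by blast+

lemma add_normal_subgroups_commute:
  fixes a b :: "'a::group_add"
  assumes A: "add_normal_subgroup A" and B: "add_normal_subgroup B" and AB: "A \<inter> B \<subseteq> {0}"
    and a: "a \<in> A" and b: "b \<in> B"
  shows "a + b = b + a"
proof -
  have "a + b - a + - b \<in> B"
    using B b by (intro add_normal_subgroup_add add_normal_subgroup_conj add_normal_subgroup_uminus)
  moreover have "a + (b + - a - b) \<in> A"
    using A a by (intro add_normal_subgroup_add add_normal_subgroup_conj add_normal_subgroup_uminus)
  moreover have "a + b - a + - b = a + (b + - a - b)"
    by (simp only: diff_conv_add_uminus add.assoc)
  ultimately have "a + b - a + - b = 0" using AB by auto
  then show ?thesis
    by (metis add_diff_cancel diff_add_cancel diff_conv_add_uminus eq_iff_diff_eq_0)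
qed

lemma graded_near_ring_components_inter:
  fixes Ns :: "'g::monoid_mult \<Rightarrow> 'a::near_ring set"
  assumes gr: "graded_near_ring Ns" and ne: "\<sigma> \<noteq> \<tau>"
  shows "Ns \<sigma> \<inter> Ns \<tau> \<subseteq> {0}"
proof
  fix a assume a: "a \<in> Ns \<sigma> \<inter> Ns \<tau>"
  define f where "f = (\<lambda>k. if k = \<sigma> then a else - a)"
  have "distinct [\<sigma>, \<tau>]" using ne by simp
  moreover have "- a \<in> Ns \<tau>"
    using a add_normal_subgroup_uminus[OF graded_near_ring_normal[OF gr]] by blast
  then have "\<forall>k\<in>set [\<sigma>, \<tau>]. f k \<in> Ns k" using a ne by (simp add: f_def)
  moreover have "sum_list (map f [\<sigma>, \<tau>]) = 0" using ne by (simp add: f_def)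
  ultimately have "\<forall>k\<in>set [\<sigma>, \<tau>]. f k = 0" by (rule graded_near_ring_independent[OF gr])
  then show "a \<in> {0}" by (simp add: f_def)
qed

lemma graded_near_ring_components_commute:
  fixes Ns :: "'g::monoid_mult \<Rightarrow> 'a::near_ring set"
  assumes gr: "graded_near_ring Ns" and "a \<in> Ns \<sigma>" and "b \<in> Ns \<tau>" and "\<sigma> \<noteq> \<tau>"
  shows "a + b = b + a"
  by (rule add_normal_subgroups_commute[OF graded_near_ring_normal[OF gr] graded_near_ring_normal[OF gr]
        graded_near_ring_components_inter[OF gr assms(4)] assms(2,3)])

definition homogeneous_decomposable ::
    "('g::monoid_mult \<Rightarrow> 'a::near_ring set) \<Rightarrow> 'a set \<Rightarrow> 'a \<Rightarrow> bool" where
  "homogeneous_decomposable Ns S x \<longleftrightarrow>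
     (\<exists>\<sigma>s f. distinct \<sigma>s \<and> (\<forall>\<sigma>\<in>set \<sigma>s. f \<sigma> \<in> S \<inter> Ns \<sigma>) \<and> x = sum_list (map f \<sigma>s))"

lemma graded_ideal_iff_decomposable:
  "graded_ideal Ns P \<longleftrightarrow> nr_ideal P \<and> (\<forall>x\<in>P. homogeneous_decomposable Ns P x)"
  unfolding graded_ideal_def homogeneous_decomposable_def ..

lemma homogeneous_decomposition_add_homogeneous:
  fixes Ns :: "'g::monoid_mult \<Rightarrow> 'a::near_ring set"
  assumes gr: "graded_near_ring Ns" and S: "\<forall>x\<in>S. \<forall>y\<in>S. x + y \<in> S"
    and a: "a \<in> S \<inter> Ns \<sigma>"
  shows "distinct \<sigma>s \<Longrightarrow> \<forall>\<tau>\<in>set \<sigma>s. f \<tau> \<in> S \<inter> Ns \<tau> \<Longrightarrow>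
    \<exists>\<sigma>s' f'. distinct \<sigma>s' \<and> set \<sigma>s' \<subseteq> insert \<sigma> (set \<sigma>s) \<and> (\<forall>\<tau>\<in>set \<sigma>s'. f' \<tau> \<in> S \<inter> Ns \<tau>)
      \<and> a + sum_list (map f \<sigma>s) = sum_list (map f' \<sigma>s')"
  \<comment> \<open>the bound on \<open>set \<sigma>s'\<close> keeps the degrees distinct in the induction step\<close>
proof (induction \<sigma>s)
  case Nil
  show ?case
    by (rule exI[of _ "[\<sigma>]"], rule exI[of _ "\<lambda>_. a"]) (use a in auto)
next
  case (Cons \<tau> \<sigma>s)
  show ?case
  proof (cases "\<tau> = \<sigma>")
    case True
    let ?f = "f(\<sigma> := a + f \<tau>)"
    have "\<sigma> \<notin> set \<sigma>s" using Cons.prems(1) True by simp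
    then have "a + sum_list (map f (\<tau> # \<sigma>s)) = sum_list (map ?f (\<tau> # \<sigma>s))"
      using True by (simp add: add.assoc)
    moreover have "a + f \<tau> \<in> S \<inter> Ns \<sigma>"
      using Cons.prems(2) a True S add_normal_subgroup_add[OF graded_near_ring_normal[OF gr]] by simp
    then have "\<forall>k\<in>set (\<tau> # \<sigma>s). ?f k \<in> S \<inter> Ns k" using Cons.prems(2) True by simp
    moreover have "distinct (\<tau> # \<sigma>s)" "set (\<tau> # \<sigma>s) \<subseteq> insert \<sigma> (set (\<tau> # \<sigma>s))"
      using Cons.prems(1) by auto
    ultimately show ?thesis by blast
  next
    case False
    obtain \<sigma>s' f' where IH: "distinct \<sigma>s'" "set \<sigma>s' \<subseteq> insert \<sigma> (set \<sigma>s)"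
      "\<forall>\<tau>\<in>set \<sigma>s'. f' \<tau> \<in> S \<inter> Ns \<tau>" "a + sum_list (map f \<sigma>s) = sum_list (map f' \<sigma>s')"
      using Cons by auto
    have \<tau>_new: "\<tau> \<notin> set \<sigma>s'" using IH(2) False Cons.prems(1) by auto
    let ?f = "f'(\<tau> := f \<tau>)"
    have "a + f \<tau> = f \<tau> + a"
      using a Cons.prems(2) by (intro graded_near_ring_components_commute[OF gr _ _ False[symmetric]]) auto
    then have "a + sum_list (map f (\<tau> # \<sigma>s)) = f \<tau> + (a + sum_list (map f \<sigma>s))"
      by (simp only: list.map sum_list.Cons add.assoc[symmetric])
    also have "\<dots> = sum_list (map ?f (\<tau> # \<sigma>s'))"
      using IH(4) \<tau>_new by simp
    finally have "a + sum_list (map f (\<tau> # \<sigma>s)) = sum_list (map ?f (\<tau> # \<sigma>s'))" .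
    moreover have "\<forall>k\<in>set (\<tau> # \<sigma>s'). ?f k \<in> S \<inter> Ns k" using IH(3) Cons.prems(2) \<tau>_new by simp
    moreover have "distinct (\<tau> # \<sigma>s')" "set (\<tau> # \<sigma>s') \<subseteq> insert \<sigma> (set (\<tau> # \<sigma>s))"
      using IH(1,2) \<tau>_new by auto
    ultimately show ?thesis by blast
  qed
qed

lemma homogeneous_decomposable_add:
  fixes Ns :: "'g::monoid_mult \<Rightarrow> 'a::near_ring set"
  assumes gr: "graded_near_ring Ns" and S: "\<forall>x\<in>S. \<forall>y\<in>S. x + y \<in> S"
    and x: "homogeneous_decomposable Ns S x" and y: "homogeneous_decomposable Ns S y"
  shows "homogeneous_decomposable Ns S (x + y)"
proof -
  have "homogeneous_decomposable Ns S (sum_list (map f \<sigma>s) + y)"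
    if "distinct \<sigma>s" "\<forall>\<tau>\<in>set \<sigma>s. f \<tau> \<in> S \<inter> Ns \<tau>" for \<sigma>s f
    using that
  proof (induction \<sigma>s)
    case Nil
    then show ?case using y by simp
  next
    case (Cons \<sigma> \<sigma>s)
    then obtain \<sigma>s' f' where IH: "distinct \<sigma>s'" "\<forall>\<tau>\<in>set \<sigma>s'. f' \<tau> \<in> S \<inter> Ns \<tau>"
      "sum_list (map f \<sigma>s) + y = sum_list (map f' \<sigma>s')"
      unfolding homogeneous_decomposable_def by auto
    have "f \<sigma> \<in> S \<inter> Ns \<sigma>" using Cons.prems by auto
    from homogeneous_decomposition_add_homogeneous[OF gr S this IH(1,2)]
    show ?case using IH(3) unfolding homogeneous_decomposable_def by (auto simp: add.assoc)
  qed
  then show ?thesis using x unfolding homogeneous_decomposable_def by blast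
qed

lemma homogeneous_decomposable_mono:
  "homogeneous_decomposable Ns S x \<Longrightarrow> S \<subseteq> T \<Longrightarrow> homogeneous_decomposable Ns T x"
  unfolding homogeneous_decomposable_def by blast

lemma subset_set_plus_left: "0 \<in> B \<Longrightarrow> A \<subseteq> A + (B :: 'a::monoid_add set)"
  using set_plus_intro[of _ A 0 B] by auto

lemma subset_set_plus_right: "0 \<in> A \<Longrightarrow> B \<subseteq> A + (B :: 'a::monoid_add set)"
  using set_plus_intro[of 0 A _ B] by auto

lemma add_normal_subgroup_set_plus:
  fixes A B :: "'a::group_add set"
  assumes A: "add_normal_subgroup A" and B: "add_normal_subgroup B"
  shows "add_normal_subgroup (A + B)"
proof -
  have add: "x + y \<in> A + B" if x_in: "x \<in> A + B" and y_in: "y \<in> A + B" for x y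
  proof -
    obtain a b where x: "x = a + b" "a \<in> A" "b \<in> B" using x_in by (rule set_plus_elim)
    obtain a' b' where y: "y = a' + b'" "a' \<in> A" "b' \<in> B" using y_in by (rule set_plus_elim)
    \<comment> \<open>move \<open>b\<close> past \<open>a'\<close> by conjugating it into \<open>B\<close>\<close>
    have "x + y = (a + a') + ((- a' + b - - a') + b')"
      unfolding x y by (simp add: add.assoc)
    moreover have "(a + a') + ((- a' + b - - a') + b') \<in> A + B"
      using add_normal_subgroup_add[OF A x(2) y(2)]
        add_normal_subgroup_add[OF B add_normal_subgroup_conj[OF B x(3)] y(3)]
      by (rule set_plus_intro)
    ultimately show ?thesis by simp
  qed
  show ?thesis
    unfolding add_normal_subgroup_def
  proof (intro conjI ballI allI)
    show "0 \<in> A + B"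
      using set_plus_intro[OF add_normal_subgroup_zero[OF A] add_normal_subgroup_zero[OF B]] by simp
  next
    fix x y assume "x \<in> A + B" "y \<in> A + B"
    then show "x + y \<in> A + B" by (rule add)
  next
    fix x assume "x \<in> A + B"
    then obtain a b where x: "x = a + b" "a \<in> A" "b \<in> B" by (rule set_plus_elim)
    have "- b \<in> A + B"
      using set_plus_intro[OF add_normal_subgroup_zero[OF A] add_normal_subgroup_uminus[OF B x(3)]]
      by simp
    moreover have "- a \<in> A + B"
      using set_plus_intro[OF add_normal_subgroup_uminus[OF A x(2)] add_normal_subgroup_zero[OF B]]
      by simp
    ultimately have "- b + - a \<in> A + B" by (rule add)
    then show "- x \<in> A + B" unfolding x(1) minus_add .
  next
    fix x h assume "h \<in> A + B"
    then obtain a b where h: "h = a + b" "a \<in> A" "b \<in> B" by (rule set_plus_elim)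
    have "x + h - x = (x + a - x) + (x + b - x)"
      unfolding h(1) by (simp only: diff_conv_add_uminus add.assoc minus_add_cancel)
    also have "\<dots> \<in> A + B"
      using add_normal_subgroup_conj[OF A h(2)] add_normal_subgroup_conj[OF B h(3)]
      by (rule set_plus_intro)
    finally show "x + h - x \<in> A + B" .
  qed
qed

lemma nr_ideal_set_plus:
  assumes A: "nr_ideal A" and B: "nr_ideal B"
  shows "nr_ideal (A + B)"
proof -
  have normal: "add_normal_subgroup (A + B)"
    by (rule add_normal_subgroup_set_plus[OF nr_ideal_normal[OF A] nr_ideal_normal[OF B]])
  have "i * n \<in> A + B" if i: "i \<in> A + B" for i n
  proof -
    obtain a b where "i = a + b" "a \<in> A" "b \<in> B" using i by (rule set_plus_elim)
    then show ?thesis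
      by (simp add: nr_distrib_right set_plus_intro nr_ideal_mult_right[OF A] nr_ideal_mult_right[OF B])
  qed
  moreover have "n * (m + i) - n * m \<in> A + B" if i: "i \<in> A + B" for n m i
  proof -
    obtain a b where ab: "i = a + b" "a \<in> A" "b \<in> B" using i by (rule set_plus_elim)
    have "n * ((m + a) + b) - n * (m + a) \<in> A + B"
      using subset_set_plus_right[OF nr_ideal_zero[OF A]] nr_ideal_mult_left[OF B ab(3)] by blast
    moreover have "n * (m + a) - n * m \<in> A + B"
      using subset_set_plus_left[OF nr_ideal_zero[OF B]] nr_ideal_mult_left[OF A ab(2)] by blast
    moreover have "n * (m + i) - n * m = (n * ((m + a) + b) - n * (m + a)) + (n * (m + a) - n * m)"
      using ab by (simp only: diff_conv_add_uminus add.assoc minus_add_cancel)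
    ultimately show ?thesis using add_normal_subgroup_add[OF normal] by simp
  qed
  ultimately show ?thesis
    using normal unfolding nr_ideal_def by blast
qed

lemma graded_ideal_set_plus:
  fixes Ns :: "'g::monoid_mult \<Rightarrow> 'a::near_ring set"
  assumes gr: "graded_near_ring Ns" and A: "graded_ideal Ns A" and B: "graded_ideal Ns B"
  shows "graded_ideal Ns (A + B)"
proof -
  note iA = graded_ideal_nr_ideal[OF A] and iB = graded_ideal_nr_ideal[OF B]
  have closed: "\<forall>x\<in>A + B. \<forall>y\<in>A + B. x + y \<in> A + B"
    using add_normal_subgroup_add[OF nr_ideal_normal[OF nr_ideal_set_plus[OF iA iB]]] by blast
  have "homogeneous_decomposable Ns (A + B) x" if x: "x \<in> A + B" for x
  proof -
    obtain a b where ab: "x = a + b" "a \<in> A" "b \<in> B" using x by (rule set_plus_elim)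
    have "homogeneous_decomposable Ns A a"
      using A ab(2) unfolding graded_ideal_iff_decomposable by blast
    then have "homogeneous_decomposable Ns (A + B) a"
      using subset_set_plus_left[OF nr_ideal_zero[OF iB]] by (rule homogeneous_decomposable_mono)
    moreover have "homogeneous_decomposable Ns B b"
      using B ab(3) unfolding graded_ideal_iff_decomposable by blast
    then have "homogeneous_decomposable Ns (A + B) b"
      using subset_set_plus_right[OF nr_ideal_zero[OF iA]] by (rule homogeneous_decomposable_mono)
    ultimately show ?thesis using homogeneous_decomposable_add[OF gr closed] ab(1) by simp
  qed
  then show ?thesis using nr_ideal_set_plus[OF iA iB] unfolding graded_ideal_iff_decomposable by blast
qed

lemma near_ring_mult_zero_left: "0 * (x::'a::near_ring) = 0"
  using nr_distrib_right[of 0 0 x] by (metis add_0_right add_left_cancel)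

lemma zero_in_ideal_prod: "0 \<in> A \<Longrightarrow> 0 \<in> B \<Longrightarrow> (0::'a::near_ring) \<in> ideal_prod A B"
  unfolding ideal_prod_def using near_ring_mult_zero_left by force

lemma ideal_prod_mono: "A \<subseteq> A' \<Longrightarrow> B \<subseteq> B' \<Longrightarrow> ideal_prod A B \<subseteq> ideal_prod A' B'"
  unfolding ideal_prod_def by blast

lemma ideal_prod_set_plus_right_subset:
  assumes P: "nr_ideal P" and IJ: "ideal_prod I J = {0}"
  shows "ideal_prod I (J + P) \<subseteq> P"
proof
  fix x assume "x \<in> ideal_prod I (J + P)"
  then obtain i j p where h: "i \<in> I" "j \<in> J" "p \<in> P" "x = i * (j + p)"
    unfolding ideal_prod_def set_plus_def by blast
  have "i * j = 0" using IJ h unfolding ideal_prod_def by blast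
  moreover have "i * (j + p) - i * j \<in> P" using nr_ideal_mult_left[OF P h(3)] .
  ultimately show "x \<in> P" using h by simp
qed

lemma ideal_prod_set_plus_left_subset:
  assumes P: "nr_ideal P" and IJ: "ideal_prod I J = {0}"
  shows "ideal_prod (I + P) J \<subseteq> P"
proof
  fix x assume "x \<in> ideal_prod (I + P) J"
  then obtain i j p where h: "i \<in> I" "j \<in> J" "p \<in> P" "x = (i + p) * j"
    unfolding ideal_prod_def set_plus_def by blast
  have "i * j = 0" using IJ h unfolding ideal_prod_def by blast
  moreover have "p * j \<in> P" using nr_ideal_mult_right[OF P h(3)] .
  ultimately show "x \<in> P" using h by (simp add: nr_distrib_right)
qed

lemma graded_weakly_prime_prod_trivial:
  assumes "graded_weakly_prime Ns P" and "graded_ideal Ns X" and "graded_ideal Ns Y"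
    and "ideal_prod X Y \<subseteq> P" and "\<not> X \<subseteq> P" and "\<not> Y \<subseteq> P"
  shows "ideal_prod X Y \<subseteq> {0}"
  using assms unfolding graded_weakly_prime_def by blast

theorem theorem2:
  fixes Ns :: "'g::monoid_mult \<Rightarrow> 'a::near_ring set"
    and P I J :: "'a set"
  assumes "graded_near_ring Ns"
    and "graded_weakly_prime Ns P"
    and "graded_ideal Ns I" and "graded_ideal Ns J"
    and "ideal_prod I J = {0}"
    and "\<not> I \<subseteq> P" and "\<not> J \<subseteq> P"
  shows "ideal_prod I P = ideal_prod P J"
proof -
  have gP: "graded_ideal Ns P" using assms(2) unfolding graded_weakly_prime_def by blast
  note iP = graded_ideal_nr_ideal[OF gP]
  have 0: "0 \<in> I" "0 \<in> J" "0 \<in> P"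
    using assms(3,4) gP by (simp_all add: nr_ideal_zero graded_ideal_nr_ideal)
  have "ideal_prod I (J + P) \<subseteq> {0}"
    using graded_weakly_prime_prod_trivial[OF assms(2,3) graded_ideal_set_plus[OF assms(1,4) gP]
        ideal_prod_set_plus_right_subset[OF iP assms(5)] assms(6)]
      subset_set_plus_left[OF 0(3)] assms(7) by blast
  moreover have "ideal_prod I P \<subseteq> ideal_prod I (J + P)"
    by (rule ideal_prod_mono[OF order_refl subset_set_plus_right[OF 0(2)]])
  moreover have "ideal_prod (I + P) J \<subseteq> {0}"
    using graded_weakly_prime_prod_trivial[OF assms(2) graded_ideal_set_plus[OF assms(1,3) gP] assms(4)
        ideal_prod_set_plus_left_subset[OF iP assms(5)] _ assms(7)]
      subset_set_plus_left[OF 0(3)] assms(6) by blast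
  moreover have "ideal_prod P J \<subseteq> ideal_prod (I + P) J"
    by (rule ideal_prod_mono[OF subset_set_plus_right[OF 0(1)] order_refl])
  ultimately show ?thesis using zero_in_ideal_prod[OF 0(1,3)] zero_in_ideal_prod[OF 0(3,2)] by blast
qed

end
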